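(* Let $(\mathbf v,p,\varphi,\mu)$ be a sufficiently smooth solution on $\Omega\times(0,T)$, $\Omega\subset\mathbb R^d$, of $$\partial_t(\rho\mathbf v)+\operatorname{div}(\rho\mathbf v\otimes\mathbf v)-\operatorname{div}(2\eta(\varphi)D\mathbf v)+\nabla p=-\operatorname{div}(a(\varphi,\nabla\varphi)\nabla\varphi\otimes\nabla\varphi),\qquad\operatorname{div}\mathbf v=0,$$ $$\partial_t\widehat{\rho c}(\varphi)+\mathbf v\cdot\nabla\widehat{\rho c}(\varphi)=\operatorname{div}(\tilde m(\varphi)\nabla\mu),\qquad \frac{\partial\widehat{\rho c}}{\partial\varphi}\mu=\frac{\partial f}{\partial\varphi}(\varphi,\nabla\varphi)-\operatorname{div}(a(\varphi,\nabla\varphi)\nabla\varphi)-\frac{\partial\rho}{\partial\varphi}\frac{|\mathbf v|^2}{2},$$ where $\rho=\hat\rho(\varphi)$, $\widehat{\rho c}$, $f$ are smooth, $\eta\ge0$, $\tilde m\ge0$, and $a$ satisfies $\frac{\partial f}{\partial\nabla\varphi}(\varphi,\nabla\varphi)=a(\varphi,\nabla\varphi)\nabla\varphi$. Set $e=\hat\rho(\varphi)\frac{|\mathbf v|^2}2+f(\varphi,\nabla\varphi)$, $\mathbf J=-\tilde m(\varphi)\nabla\mu$, $\boldsymbol\xi=\frac{\partial f}{\partial\nabla\varphi}(\varphi,\nabla\varphi)$, $\dot\varphi=\partial_t\varphi+\mathbf v\cdot\nabla\varphi$ and $\mathbf T=2\eta(\varphi)D\mathbf v-\nabla\varphi\otimes\boldsymbol\xi-p\mathbf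 I$. Then the local dissipation identity $$\partial_te+\mathbf v\cdot\nabla e-\operatorname{div}(\mathbf T\mathbf v)-\operatorname{div}(\dot\varphi\,\boldsymbol\xi)+\operatorname{div}(\mu\mathbf J)=-\big(2\eta(\varphi)|D\mathbf v|^2+\tilde m(\varphi)|\nabla\mu|^2\big)\le0$$ holds pointwise.
   Context: $D\mathbf v=\frac12(\nabla\mathbf v+\nabla\mathbf v^T)$; $\mathbf a\otimes\mathbf b=\mathbf a\mathbf b^T$; the divergence of a matrix field is row-wise; $\mathbf T\mathbf v$ is the matrix–vector product with $\mathbf T$ symmetric. Here $\varphi$ is an order parameter for a mixture of two incompressible fluids, $\hat\rho(\varphi)$ the total mass density and $\widehat{\rho c}(\varphi)$ the difference of the partial mass densities, both expressed as functions of $\varphi$; $\frac{\partial f}{\partial\varphi}$, $\frac{\partial f}{\partial\nabla\varphi}$ are partial derivatives of $f(z,\mathbf p)$ in $z$ and $\mathbf p$. *)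

theory Defs
  imports "HOL-Analysis.Analysis"
begin

fun iter_fd :: "'a list \<Rightarrow> ('a::real_normed_vector \<Rightarrow> 'b::real_normed_vector) \<Rightarrow> 'a \<Rightarrow> 'b" where
  "iter_fd [] u = u"
| "iter_fd (b # bs) u = (\<lambda>z. frechet_derivative (iter_fd bs u) (at z) b)"

definition smooth_on :: "'a::euclidean_space set \<Rightarrow> ('a \<Rightarrow> 'b::real_normed_vector) \<Rightarrow> bool" where
  "smooth_on S u \<longleftrightarrow> (\<forall>bs. set bs \<subseteq> Basis \<longrightarrow> (\<forall>z\<in>S. iter_fd bs u differentiable (at z)))"

definition dt :: "((real^'d) \<times> real \<Rightarrow> 'b::real_normed_vector) \<Rightarrow> (real^'d) \<times> real \<Rightarrow> 'b" where
  "dt u z = frechet_derivative u (at z) (0, 1)"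

definition dx :: "'d \<Rightarrow> ((real^'d) \<times> real \<Rightarrow> 'b::real_normed_vector) \<Rightarrow> (real^'d) \<times> real \<Rightarrow> 'b" where
  "dx i u z = frechet_derivative u (at z) (axis i 1, 0)"

definition grad :: "((real^'d::finite) \<times> real \<Rightarrow> real) \<Rightarrow> (real^'d) \<times> real \<Rightarrow> real^'d" where
  "grad u z = (\<chi> i. dx i u z)"

definition divg :: "((real^'d::finite) \<times> real \<Rightarrow> real^'d) \<Rightarrow> (real^'d) \<times> real \<Rightarrow> real" where
  "divg w z = (\<Sum>i\<in>UNIV. dx i (\<lambda>y. w y $ i) z)"

text \<open>Row-wise divergence of a matrix field (M $ i $ j = entry in row i, column j).\<close>
definition divm :: "((real^'d::finite) \<times> real \<Rightarrow> real^'d^'d) \<Rightarrow> (real^'d) \<times> real \<Rightarrow> real^'d" where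
  "divm M z = (\<chi> i. \<Sum>j\<in>UNIV. dx j (\<lambda>y. M y $ i $ j) z)"

definition symgrad :: "((real^'d::finite) \<times> real \<Rightarrow> real^'d) \<Rightarrow> (real^'d) \<times> real \<Rightarrow> real^'d^'d" where
  "symgrad v z = (\<chi> i j. (dx j (\<lambda>y. v y $ i) z + dx i (\<lambda>y. v y $ j) z) / 2)"

definition outer :: "real^'d::finite \<Rightarrow> real^'d \<Rightarrow> real^'d^'d" where
  "outer a b = (\<chi> i j. a $ i * b $ j)"

definition frob2 :: "real^'d::finite^'d \<Rightarrow> real" where
  "frob2 A = (\<Sum>i\<in>UNIV. \<Sum>j\<in>UNIV. (A $ i $ j)^2)"

definition df_dphi :: "(real \<Rightarrow> real^'d \<Rightarrow> real) \<Rightarrow> real \<Rightarrow> real^'d \<Rightarrow> real" where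
  "df_dphi f z p = deriv (\<lambda>s. f s p) z"

definition df_dgrad :: "(real \<Rightarrow> real^'d::finite \<Rightarrow> real) \<Rightarrow> real \<Rightarrow> real^'d \<Rightarrow> real^'d" where
  "df_dgrad f z p = (\<chi> i. deriv (\<lambda>s. f z (p + s *\<^sub>R axis i 1)) 0)"

end

theory Submission
  imports Defs
begin

(* The local dissipation identity is a pointwise consequence of the equations: expanding
   every divergence by the product rule and inserting the momentum, transport and chemical
   potential equations, all terms without a sign cancel.  The cancellations use
   (i) the directional-derivative form of the material derivative, d/dt + v.grad = D_(v,1),
   (ii) symmetry of the stress tensor T (the capillary part grad phi (x) xi is symmetric
        because xi = a grad phi), so that div(T v) = div T . v + T : grad v,
   (iii) T : grad v = 2 eta |Dv|^2 - xi . (grad v)^T grad phi for divergence-free v, and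
   (iv) Schwarz's theorem: the Hessian of phi is symmetric and d/dt commutes with grad. *)

lemma fd_apply: "(u has_derivative U) (at z) \<Longrightarrow> frechet_derivative u (at z) b = U b"
  by (metis frechet_derivative_at)

lemma fd_works: "u differentiable (at z) \<Longrightarrow> (u has_derivative frechet_derivative u (at z)) (at z)"
  using frechet_derivative_works by blast

lemma fd_add: "u differentiable (at z) \<Longrightarrow> w differentiable (at z) \<Longrightarrow>
  frechet_derivative (\<lambda>y. u y + w y) (at z) b = frechet_derivative u (at z) b + frechet_derivative w (at z) b"
  by (rule fd_apply) (intro has_derivative_add fd_works)

lemma fd_diff: "u differentiable (at z) \<Longrightarrow> w differentiable (at z) \<Longrightarrow>
  frechet_derivative (\<lambda>y. u y - w y) (at z) b = frechet_derivative u (at z) b - frechet_derivative w (at z) b"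
  by (rule fd_apply) (intro has_derivative_diff fd_works)

lemma fd_minus: "u differentiable (at z) \<Longrightarrow>
  frechet_derivative (\<lambda>y. - u y) (at z) b = - frechet_derivative u (at z) b"
  by (rule fd_apply) (intro has_derivative_minus fd_works)

lemma fd_mult:
  fixes u w :: "'a::real_normed_vector \<Rightarrow> real"
  shows "u differentiable (at z) \<Longrightarrow> w differentiable (at z) \<Longrightarrow>
  frechet_derivative (\<lambda>y. u y * w y) (at z) b = u z * frechet_derivative w (at z) b + frechet_derivative u (at z) b * w z"
  by (rule fd_apply) (intro has_derivative_mult fd_works)

lemma fd_scaleR:
  fixes u :: "'a::real_normed_vector \<Rightarrow> real" and w :: "'a \<Rightarrow> 'b::real_normed_vector"
  shows "u differentiable (at z) \<Longrightarrow> w differentiable (at z) \<Longrightarrow>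
  frechet_derivative (\<lambda>y. u y *\<^sub>R w y) (at z) b = u z *\<^sub>R frechet_derivative w (at z) b + frechet_derivative u (at z) b *\<^sub>R w z"
  by (rule fd_apply) (intro has_derivative_scaleR fd_works)

lemma fd_inner:
  fixes u w :: "'a::real_normed_vector \<Rightarrow> 'b::real_inner"
  shows "u differentiable (at z) \<Longrightarrow> w differentiable (at z) \<Longrightarrow>
  frechet_derivative (\<lambda>y. u y \<bullet> w y) (at z) b = u z \<bullet> frechet_derivative w (at z) b + frechet_derivative u (at z) b \<bullet> w z"
  by (rule fd_apply) (intro has_derivative_inner fd_works)

lemma fd_divide_const:
  fixes u :: "'a::real_normed_vector \<Rightarrow> real"
  assumes "u differentiable (at z)"
  shows "frechet_derivative (\<lambda>y. u y / c) (at z) b = frechet_derivative u (at z) b / c"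
proof -
  have "((\<lambda>y. u y * inverse c) has_derivative (\<lambda>h. u z * 0 + frechet_derivative u (at z) h * inverse c)) (at z)"
    by (intro has_derivative_mult fd_works assms has_derivative_const)
  then show ?thesis
    by (simp add: fd_apply divide_inverse)
qed

lemma fd_sum:
  assumes "\<And>i. i \<in> I \<Longrightarrow> u i differentiable (at z)"
  shows "frechet_derivative (\<lambda>y. \<Sum>i\<in>I. u i y) (at z) b = (\<Sum>i\<in>I. frechet_derivative (u i) (at z) b)"
proof (cases "finite I")
  case True
  then show ?thesis
    using assms by (intro fd_apply has_derivative_sum fd_works) auto
qed simp

lemma fd_real_comp:
  fixes g :: "real \<Rightarrow> real" and u :: "'a::real_normed_vector \<Rightarrow> real"
  assumes "g differentiable (at (u z))" "u differentiable (at z)"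
  shows "frechet_derivative (\<lambda>y. g (u y)) (at z) b = deriv g (u z) * frechet_derivative u (at z) b"
proof -
  have "(g has_derivative (\<lambda>h. deriv g (u z) * h)) (at (u z))"
    using assms(1) DERIV_deriv_iff_real_differentiable has_field_derivative_def by (metis mult_commute_abs)
  then show ?thesis
    using fd_apply has_derivative_compose[OF fd_works[OF assms(2)]] by blast
qed

lemma differentiable_vec_nth: "w differentiable (at z) \<Longrightarrow> (\<lambda>y. w y $ i) differentiable (at z)"
  by (rule differentiable_compose[where f="\<lambda>x. x $ i"])
     (auto intro: bounded_linear_imp_differentiable bounded_linear_vec_nth)

lemma fd_vec_nth: "w differentiable (at z) \<Longrightarrow>
  frechet_derivative (\<lambda>y. w y $ i) (at z) b = frechet_derivative w (at z) b $ i"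
  by (rule fd_apply) (intro bounded_linear.has_derivative[OF bounded_linear_vec_nth] fd_works)

lemma vec_lambda_as_sum: "(\<chi> i. h i) = (\<Sum>i\<in>UNIV. h i *\<^sub>R axis i (1::real))"
  by (simp add: vec_eq_iff axis_def if_distrib[of "\<lambda>t. h _ * t"] cong: if_cong)

lemma has_derivative_vec_lambda:
  fixes F :: "'n::finite \<Rightarrow> 'a::real_normed_vector \<Rightarrow> real"
  assumes "\<And>i. F i differentiable (at z)"
  shows "((\<lambda>y. \<chi> i. F i y) has_derivative (\<lambda>h. \<chi> i. frechet_derivative (F i) (at z) h)) (at z)"
proof -
  have "((\<lambda>y. \<Sum>i\<in>UNIV. F i y *\<^sub>R axis i (1::real)) has_derivative
      (\<lambda>h. \<Sum>i\<in>UNIV. frechet_derivative (F i) (at z) h *\<^sub>R axis i 1)) (at z)"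
    using assms by (intro has_derivative_sum has_derivative_scaleR_left fd_works)
  then show ?thesis
    by (simp only: vec_lambda_as_sum[symmetric])
qed

lemma differentiable_vec_lambda:
  fixes F :: "'n::finite \<Rightarrow> 'a::real_normed_vector \<Rightarrow> real"
  shows "(\<And>i. F i differentiable (at z)) \<Longrightarrow> (\<lambda>y. \<chi> i. F i y) differentiable (at z)"
  using has_derivative_vec_lambda differentiableI by blast

lemma has_derivative_along_line:
  fixes u :: "'a::real_normed_vector \<Rightarrow> real"
  assumes "u differentiable (at (q + t *\<^sub>R b))"
  shows "((\<lambda>t. u (q + t *\<^sub>R b)) has_derivative (\<lambda>h. h * frechet_derivative u (at (q + t *\<^sub>R b)) b)) (at t within X)"
proof -
  have line: "((\<lambda>t. q + t *\<^sub>R b) has_derivative (\<lambda>h. h *\<^sub>R b)) (at t within X)"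
    by (auto intro!: derivative_eq_intros)
  have comp: "((\<lambda>t. u (q + t *\<^sub>R b)) has_derivative (\<lambda>h. frechet_derivative u (at (q + t *\<^sub>R b)) (h *\<^sub>R b))) (at t within X)"
    using has_derivative_in_compose[OF line has_derivative_subset[OF fd_works[OF assms]]] by (simp add: o_def)
  have scale: "frechet_derivative u (at (q + t *\<^sub>R b)) (h *\<^sub>R b) = h * frechet_derivative u (at (q + t *\<^sub>R b)) b" for h
    using linear_scale[OF linear_frechet_derivative[OF assms], of h b] by simp
  show ?thesis using comp unfolding scale .
qed

lemma second_difference_mvt:
  fixes u :: "'a::real_normed_vector \<Rightarrow> real"
  assumes inside: "\<And>t r. 0 \<le> t \<Longrightarrow> t \<le> s \<Longrightarrow> 0 \<le> r \<Longrightarrow> r \<le> s \<Longrightarrow> z + t *\<^sub>R a + r *\<^sub>R b \<in> S"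
    and s: "0 < s"
    and du: "\<forall>y\<in>S. u differentiable (at y)"
    and da: "\<forall>y\<in>S. (\<lambda>w. frechet_derivative u (at w) a) differentiable (at y)"
  shows "\<exists>t r. 0 \<le> t \<and> t \<le> s \<and> 0 \<le> r \<and> r \<le> s \<and>
    u (z + s *\<^sub>R a + s *\<^sub>R b) - u (z + s *\<^sub>R a) - u (z + s *\<^sub>R b) + u z
     = s\<^sup>2 * frechet_derivative (\<lambda>w. frechet_derivative u (at w) a) (at (z + t *\<^sub>R a + r *\<^sub>R b)) b"
proof -
  define Ua where "Ua = (\<lambda>w. frechet_derivative u (at w) a)"
  define g where "g = (\<lambda>t. u ((z + s *\<^sub>R b) + t *\<^sub>R a) - u (z + t *\<^sub>R a))"
  have gd: "(g has_derivative (\<lambda>h. h * (Ua (z + s *\<^sub>R b + t *\<^sub>R a) - Ua (z + t *\<^sub>R a)))) (at t within {0..s})"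
    if "0 \<le> t" "t \<le> s" for t
  proof -
    have "z + s *\<^sub>R b + t *\<^sub>R a \<in> S" "z + t *\<^sub>R a \<in> S"
      using inside[of t s] inside[of t 0] that s by (simp_all add: algebra_simps)
    then show ?thesis unfolding g_def Ua_def
      using has_derivative_diff[OF has_derivative_along_line[of u "z + s *\<^sub>R b" t a "{0..s}"]
          has_derivative_along_line[of u z t a "{0..s}"]] du
      by (simp add: algebra_simps)
  qed
  obtain t where t: "t \<in> {0<..<s}"
    and gt: "g s - g 0 = (s - 0) * (Ua (z + s *\<^sub>R b + t *\<^sub>R a) - Ua (z + t *\<^sub>R a))"
    using mvt_simple[OF s gd] by auto
  define k where "k = (\<lambda>r. Ua ((z + t *\<^sub>R a) + r *\<^sub>R b))"
  have kd: "(k has_derivative (\<lambda>h. h * frechet_derivative Ua (at (z + t *\<^sub>R a + r *\<^sub>R b)) b)) (at r within {0..s})"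
    if "0 \<le> r" "r \<le> s" for r
    using inside[of t r] that t da has_derivative_along_line[of Ua "z + t *\<^sub>R a" r b]
    unfolding k_def Ua_def by auto
  obtain r where r: "r \<in> {0<..<s}"
    and kr: "k s - k 0 = (s - 0) * frechet_derivative Ua (at (z + t *\<^sub>R a + r *\<^sub>R b)) b"
    using mvt_simple[OF s kd] by auto
  have "u (z + s *\<^sub>R a + s *\<^sub>R b) - u (z + s *\<^sub>R a) - u (z + s *\<^sub>R b) + u z = g s - g 0"
    unfolding g_def by (simp add: algebra_simps)
  also have "\<dots> = s * (k s - k 0)" unfolding gt k_def by (simp add: algebra_simps)
  also have "\<dots> = s\<^sup>2 * frechet_derivative Ua (at (z + t *\<^sub>R a + r *\<^sub>R b)) b"
    unfolding kr by (simp add: power2_eq_square)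
  finally show ?thesis unfolding Ua_def using t r by (intro exI[of _ t] exI[of _ r]) auto
qed

lemma small_parallelogram:
  fixes z a b :: "'a::real_normed_vector"
  assumes d: "0 < d"
  obtains s where "0 < s"
    "\<And>t r. 0 \<le> t \<Longrightarrow> t \<le> s \<Longrightarrow> 0 \<le> r \<Longrightarrow> r \<le> s \<Longrightarrow> dist (z + t *\<^sub>R a + r *\<^sub>R b) z < d"
proof
  define N where "N = norm a + norm b + 1"
  have N: "0 < N" unfolding N_def by (simp add: add_nonneg_pos)
  show "0 < d / (2 * N)" using d N by simp
  fix t r assume t: "0 \<le> t" "t \<le> d / (2 * N)" and r: "0 \<le> r" "r \<le> d / (2 * N)"
  have "dist (z + t *\<^sub>R a + r *\<^sub>R b) z = norm (t *\<^sub>R a + r *\<^sub>R b)"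
    by (simp add: dist_norm)
  also have "\<dots> \<le> t * norm a + r * norm b"
    using norm_triangle_ineq[of "t *\<^sub>R a" "r *\<^sub>R b"] t r by simp
  also have "\<dots> \<le> d / (2 * N) * norm a + d / (2 * N) * norm b"
    using t r by (intro add_mono mult_right_mono) auto
  also have "\<dots> < d / (2 * N) * N"
    using d N by (simp add: N_def distrib_left)
  also have "\<dots> = d / 2"
    using N by simp
  finally show "dist (z + t *\<^sub>R a + r *\<^sub>R b) z < d" using d by simp
qed

lemma mixed_partials_meet_nearby:
  fixes u :: "'a::real_normed_vector \<Rightarrow> real"
  assumes S: "open S" "z \<in> S" and d: "0 < d"
    and du: "\<forall>y\<in>S. u differentiable (at y)"
    and da: "\<forall>y\<in>S. (\<lambda>w. frechet_derivative u (at w) a) differentiable (at y)"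
    and db: "\<forall>y\<in>S. (\<lambda>w. frechet_derivative u (at w) b) differentiable (at y)"
  shows "\<exists>y1 y2. dist y1 z < d \<and> dist y2 z < d \<and>
    frechet_derivative (\<lambda>w. frechet_derivative u (at w) a) (at y1) b
      = frechet_derivative (\<lambda>w. frechet_derivative u (at w) b) (at y2) a"
proof -
  obtain d0 where d0: "0 < d0" "ball z d0 \<subseteq> S"
    using S open_contains_ball by blast
  define d' where "d' = min d d0"
  have d': "0 < d'" "d' \<le> d" "ball z d' \<subseteq> S"
    using d d0 unfolding d'_def by auto
  obtain s where s: "0 < s"
    and close: "\<And>t r. 0 \<le> t \<Longrightarrow> t \<le> s \<Longrightarrow> 0 \<le> r \<Longrightarrow> r \<le> s \<Longrightarrow> dist (z + t *\<^sub>R a + r *\<^sub>R b) z < d'"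
    using small_parallelogram[OF d'(1)] by blast
  have inside: "z + t *\<^sub>R a + r *\<^sub>R b \<in> S" "z + t *\<^sub>R b + r *\<^sub>R a \<in> S"
    if "0 \<le> t" "t \<le> s" "0 \<le> r" "r \<le> s" for t r
  proof -
    show "z + t *\<^sub>R a + r *\<^sub>R b \<in> S"
      using close[OF that] d'(3) by (auto simp: dist_commute)
    have "z + r *\<^sub>R a + t *\<^sub>R b \<in> S"
      using close[of r t] that d'(3) by (auto simp: dist_commute)
    then show "z + t *\<^sub>R b + r *\<^sub>R a \<in> S" by (simp add: add_ac)
  qed
  obtain t1 r1 where tr1: "0 \<le> t1" "t1 \<le> s" "0 \<le> r1" "r1 \<le> s"
    and h1: "u (z + s *\<^sub>R a + s *\<^sub>R b) - u (z + s *\<^sub>R a) - u (z + s *\<^sub>R b) + u z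
      = s\<^sup>2 * frechet_derivative (\<lambda>w. frechet_derivative u (at w) a) (at (z + t1 *\<^sub>R a + r1 *\<^sub>R b)) b"
    using second_difference_mvt[OF inside(1) s du da] by blast
  obtain t2 r2 where tr2: "0 \<le> t2" "t2 \<le> s" "0 \<le> r2" "r2 \<le> s"
    and h2: "u (z + s *\<^sub>R b + s *\<^sub>R a) - u (z + s *\<^sub>R b) - u (z + s *\<^sub>R a) + u z
      = s\<^sup>2 * frechet_derivative (\<lambda>w. frechet_derivative u (at w) b) (at (z + t2 *\<^sub>R b + r2 *\<^sub>R a)) a"
    using second_difference_mvt[OF inside(2) s du db] by blast
  show ?thesis
  proof (intro exI conjI)
    show "dist (z + t1 *\<^sub>R a + r1 *\<^sub>R b) z < d" using close[OF tr1] d' by simp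
    show "dist (z + t2 *\<^sub>R b + r2 *\<^sub>R a) z < d"
      using close[OF tr2(3,4,1,2)] d' by (simp add: add_ac)
    show "frechet_derivative (\<lambda>w. frechet_derivative u (at w) a) (at (z + t1 *\<^sub>R a + r1 *\<^sub>R b)) b
      = frechet_derivative (\<lambda>w. frechet_derivative u (at w) b) (at (z + t2 *\<^sub>R b + r2 *\<^sub>R a)) a"
    proof -
      have "s\<^sup>2 * frechet_derivative (\<lambda>w. frechet_derivative u (at w) a) (at (z + t1 *\<^sub>R a + r1 *\<^sub>R b)) b
        = s\<^sup>2 * frechet_derivative (\<lambda>w. frechet_derivative u (at w) b) (at (z + t2 *\<^sub>R b + r2 *\<^sub>R a)) a"
        using h1 h2 by (simp add: algebra_simps)
      then show ?thesis using s by simp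
    qed
  qed
qed

lemma mixed_partials_commute:
  fixes u :: "'a::real_normed_vector \<Rightarrow> real"
  assumes S: "open S" "z \<in> S"
    and du: "\<forall>y\<in>S. u differentiable (at y)"
    and da: "\<forall>y\<in>S. (\<lambda>w. frechet_derivative u (at w) a) differentiable (at y)"
    and db: "\<forall>y\<in>S. (\<lambda>w. frechet_derivative u (at w) b) differentiable (at y)"
    and cA: "isCont (\<lambda>y. frechet_derivative (\<lambda>w. frechet_derivative u (at w) a) (at y) b) z"
    and cB: "isCont (\<lambda>y. frechet_derivative (\<lambda>w. frechet_derivative u (at w) b) (at y) a) z"
  shows "frechet_derivative (\<lambda>w. frechet_derivative u (at w) a) (at z) b
       = frechet_derivative (\<lambda>w. frechet_derivative u (at w) b) (at z) a"
    (is "?A z = ?B z")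
proof (rule ccontr)
  assume "?A z \<noteq> ?B z"
  then have e: "0 < \<bar>?A z - ?B z\<bar> / 2" by simp
  obtain d1 where d1: "d1 > 0" "\<And>y. dist y z < d1 \<Longrightarrow> dist (?A y) (?A z) < \<bar>?A z - ?B z\<bar> / 2"
    using cA e unfolding continuous_at_eps_delta by blast
  obtain d2 where d2: "d2 > 0" "\<And>y. dist y z < d2 \<Longrightarrow> dist (?B y) (?B z) < \<bar>?A z - ?B z\<bar> / 2"
    using cB e unfolding continuous_at_eps_delta by blast
  obtain y1 y2 where y: "dist y1 z < min d1 d2" "dist y2 z < min d1 d2" and meet: "?A y1 = ?B y2"
    using mixed_partials_meet_nearby[OF S _ du da db, of "min d1 d2"] d1 d2 by auto
  have "?A z - ?B z = (?B y2 - ?B z) - (?A y1 - ?A z)"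
    using meet by simp
  then have "\<bar>?A z - ?B z\<bar> \<le> \<bar>?B y2 - ?B z\<bar> + \<bar>?A y1 - ?A z\<bar>"
    by (metis abs_triangle_ineq4)
  also have "\<dots> < \<bar>?A z - ?B z\<bar>"
    using d1(2)[of y1] d2(2)[of y2] y by (simp add: dist_real_def)
  finally show False by simp
qed

lemma differentiable_transform_open:
  assumes "open U" "z \<in> U" "\<And>y. y \<in> U \<Longrightarrow> u y = w y" "u differentiable (at z)"
  shows "w differentiable (at z)"
  using assms has_derivative_transform_within_open[of u _ z UNIV U w] unfolding differentiable_def by metis

lemma space_direction_Basis: "((axis i 1, 0) :: (real^'d::finite) \<times> real) \<in> Basis"
  by (auto simp: Basis_prod_def Basis_vec_def)

lemma time_direction_Basis: "((0, 1) :: (real^'d::finite) \<times> real) \<in> Basis"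
  by (auto simp: Basis_prod_def)

lemma gradient_direction_Basis: "((0, axis k 1) :: real \<times> (real^'d::finite)) \<in> Basis"
  by (auto simp: Basis_prod_def Basis_vec_def)

lemma smooth_on_differentiable: "smooth_on S u \<Longrightarrow> y \<in> S \<Longrightarrow> u differentiable (at y)"
  unfolding smooth_on_def by (metis empty_subsetI iter_fd.simps(1) list.set(1))

lemma smooth_on_partial_differentiable:
  "smooth_on S u \<Longrightarrow> b \<in> Basis \<Longrightarrow> y \<in> S \<Longrightarrow> (\<lambda>w. frechet_derivative u (at w) b) differentiable (at y)"
  unfolding smooth_on_def by (drule spec[of _ "[b]"]) simp

lemma smooth_on_second_partial_differentiable:
  "smooth_on S u \<Longrightarrow> b1 \<in> Basis \<Longrightarrow> b2 \<in> Basis \<Longrightarrow> y \<in> S \<Longrightarrow>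
   (\<lambda>w. frechet_derivative (\<lambda>x. frechet_derivative u (at x) b1) (at w) b2) differentiable (at y)"
  unfolding smooth_on_def by (drule spec[of _ "[b2, b1]"]) simp

text \<open>The components of a smooth vector field are smooth: iterated partial derivatives
  commute with taking components.\<close>
lemma smooth_on_component:
  fixes v :: "'a::euclidean_space \<Rightarrow> real^'n"
  assumes S: "open S" and v: "smooth_on S v"
  shows "smooth_on S (\<lambda>y. v y $ i)"
proof -
  have agree: "\<forall>y\<in>S. iter_fd bs (\<lambda>y. v y $ i) y = iter_fd bs v y $ i" if "set bs \<subseteq> Basis" for bs :: "'a list"
    using that
  proof (induction bs)
    case (Cons b bs)
    then have IH: "\<And>y. y \<in> S \<Longrightarrow> iter_fd bs (\<lambda>y. v y $ i) y = iter_fd bs v y $ i"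
      by simp
    show ?case
    proof
      fix y assume y: "y \<in> S"
      have dv: "iter_fd bs v differentiable (at y)"
        using v Cons.prems y unfolding smooth_on_def by simp
      have "frechet_derivative (\<lambda>w. iter_fd bs v w $ i) (at y) = frechet_derivative (iter_fd bs (\<lambda>y. v y $ i)) (at y)"
        by (rule frechet_derivative_transform_within_open[OF differentiable_vec_nth[OF dv] S y]) (simp add: IH)
      then show "iter_fd (b # bs) (\<lambda>y. v y $ i) y = iter_fd (b # bs) v y $ i"
        using fd_vec_nth[OF dv, of i b] by simp
    qed
  qed simp
  show ?thesis
    unfolding smooth_on_def
  proof (intro allI impI ballI)
    fix bs :: "'a list" and y assume bs: "set bs \<subseteq> Basis" and y: "y \<in> S"
    have "iter_fd bs v differentiable (at y)"
      using v bs y unfolding smooth_on_def by simp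
    then show "iter_fd bs (\<lambda>y. v y $ i) differentiable (at y)"
      using differentiable_transform_open[OF S y, of "\<lambda>w. iter_fd bs v w $ i"] agree[OF bs]
        differentiable_vec_nth by metis
  qed
qed

lemma smooth_mixed_partials:
  fixes u :: "'a::euclidean_space \<Rightarrow> real"
  assumes S: "open S" "z \<in> S" and u: "smooth_on S u" and b: "b1 \<in> Basis" "b2 \<in> Basis"
  shows "frechet_derivative (\<lambda>w. frechet_derivative u (at w) b1) (at z) b2
       = frechet_derivative (\<lambda>w. frechet_derivative u (at w) b2) (at z) b1"
  using S b
  by (intro mixed_partials_commute[OF S] ballI differentiable_imp_continuous_within
      smooth_on_differentiable[OF u] smooth_on_partial_differentiable[OF u]
      smooth_on_second_partial_differentiable[OF u])

definition jac :: "((real^'d::finite) \<times> real \<Rightarrow> real^'d) \<Rightarrow> (real^'d) \<times> real \<Rightarrow> real^'d^'d" where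
  "jac w z = (\<chi> i j. dx j (\<lambda>y. w y $ i) z)"

definition ddot :: "real^'d::finite^'d \<Rightarrow> real^'d^'d \<Rightarrow> real" where
  "ddot A B = (\<Sum>i\<in>UNIV. \<Sum>j\<in>UNIV. A $ i $ j * B $ i $ j)"

lemma space_time_direction:
  "((q, 1) :: (real^'d::finite) \<times> real) = (0, 1) + (\<Sum>i\<in>UNIV. (q $ i) *\<^sub>R (axis i 1, 0))"
proof -
  have "fst (\<Sum>i\<in>UNIV. (q $ i) *\<^sub>R ((axis i 1, 0) :: (real^'d) \<times> real)) = q"
    by (simp add: fst_sum vec_lambda_as_sum[symmetric])
  moreover have "snd (\<Sum>i\<in>UNIV. (q $ i) *\<^sub>R ((axis i 1, 0) :: (real^'d) \<times> real)) = 0"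
    by (simp add: snd_sum)
  ultimately show ?thesis by (simp add: prod_eq_iff)
qed

lemma material_derivative:
  fixes u :: "(real^'d::finite) \<times> real \<Rightarrow> real"
  assumes "u differentiable (at z)"
  shows "frechet_derivative u (at z) (q, 1) = dt u z + q \<bullet> grad u z"
proof -
  have lin: "linear (frechet_derivative u (at z))"
    using linear_frechet_derivative[OF assms] .
  have "frechet_derivative u (at z) (q, 1)
      = frechet_derivative u (at z) (0, 1) + (\<Sum>i\<in>UNIV. q $ i * frechet_derivative u (at z) (axis i 1, 0))"
    by (subst space_time_direction) (simp only: linear_add[OF lin] linear_sum[OF lin] linear_scale[OF lin] real_scaleR_def)
  then show ?thesis
    by (simp add: dt_def grad_def dx_def inner_vec_def)
qed

lemma material_derivative_vec:
  fixes w :: "(real^'d::finite) \<times> real \<Rightarrow> real^'d"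
  assumes "w differentiable (at z)"
  shows "frechet_derivative w (at z) (q, 1) = dt w z + jac w z *v q"
proof (subst vec_eq_iff, intro allI)
  fix i
  have "frechet_derivative w (at z) (q, 1) $ i = dt (\<lambda>y. w y $ i) z + q \<bullet> grad (\<lambda>y. w y $ i) z"
    using fd_vec_nth[OF assms] material_derivative[OF differentiable_vec_nth[OF assms]] by metis
  then show "frechet_derivative w (at z) (q, 1) $ i = (dt w z + jac w z *v q) $ i"
    using fd_vec_nth[OF assms]
    by (simp add: dt_def jac_def grad_def matrix_vector_mult_def inner_vec_def mult.commute)
qed

lemma grad_inner:
  fixes w q :: "(real^'d::finite) \<times> real \<Rightarrow> real^'d"
  assumes "w differentiable (at z)" "q differentiable (at z)"
  shows "grad (\<lambda>y. w y \<bullet> q y) z = transpose (jac w z) *v q z + transpose (jac q z) *v w z"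
proof (subst vec_eq_iff, intro allI)
  fix k
  have "grad (\<lambda>y. w y \<bullet> q y) z $ k
      = w z \<bullet> frechet_derivative q (at z) (axis k 1, 0) + frechet_derivative w (at z) (axis k 1, 0) \<bullet> q z"
    using assms by (simp add: grad_def dx_def fd_inner)
  then show "grad (\<lambda>y. w y \<bullet> q y) z $ k = (transpose (jac w z) *v q z + transpose (jac q z) *v w z) $ k"
    using assms by (simp add: jac_def dx_def fd_vec_nth matrix_vector_mult_def transpose_def
        inner_vec_def mult.commute add.commute)
qed

lemma divg_scaleR:
  assumes "s differentiable (at z)" "w differentiable (at z)"
  shows "divg (\<lambda>y. s y *\<^sub>R w y) z = grad s z \<bullet> w z + s z * divg w z"
  using assms
  by (simp add: divg_def grad_def dx_def fd_mult differentiable_vec_nth inner_vec_def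
      sum.distrib sum_distrib_left algebra_simps)

lemma divg_minus:
  assumes "w differentiable (at z)"
  shows "divg (\<lambda>y. - w y) z = - divg w z"
  using assms by (simp add: divg_def dx_def fd_minus differentiable_vec_nth sum_negf)

lemma divm_diff:
  assumes "\<And>i j. (\<lambda>y. A y $ i $ j) differentiable (at z)" "\<And>i j. (\<lambda>y. B y $ i $ j) differentiable (at z)"
  shows "divm (\<lambda>y. A y - B y) z = divm A z - divm B z"
  using assms by (simp add: vec_eq_iff divm_def dx_def fd_diff sum_subtractf)

lemma divm_scaled_identity:
  fixes s :: "(real^'d::finite) \<times> real \<Rightarrow> real"
  assumes "s differentiable (at z)"
  shows "divm (\<lambda>y. s y *\<^sub>R mat 1) z = grad s z"
proof -
  have "dx j (\<lambda>y. (s y *\<^sub>R mat 1 :: real^'d^'d) $ i $ j) z = (if i = j then dx j s z else 0)" for i j :: 'd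
    by (cases "i = j") (simp_all add: mat_def dx_def)
  then show ?thesis
    by (simp add: vec_eq_iff divm_def grad_def)
qed

lemma divm_scaleR_outer:
  fixes w :: "(real^'d::finite) \<times> real \<Rightarrow> real^'d"
  assumes "s differentiable (at z)" "w differentiable (at z)"
  shows "divm (\<lambda>y. s y *\<^sub>R outer (w y) (w y)) z
    = (grad s z \<bullet> w z + s z * divg w z) *\<^sub>R w z + s z *\<^sub>R (jac w z *v w z)"
proof (subst vec_eq_iff, intro allI)
  fix i
  have "dx j (\<lambda>y. (s y *\<^sub>R outer (w y) (w y)) $ i $ j) z
      = dx j s z * w z $ j * w z $ i + s z * w z $ i * dx j (\<lambda>y. w y $ j) z
        + s z * (dx j (\<lambda>y. w y $ i) z * w z $ j)" for j
    using assms
    by (simp add: outer_def dx_def fd_mult differentiable_vec_nth differentiable_mult algebra_simps)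
  then show "divm (\<lambda>y. s y *\<^sub>R outer (w y) (w y)) z $ i
    = ((grad s z \<bullet> w z + s z * divg w z) *\<^sub>R w z + s z *\<^sub>R (jac w z *v w z)) $ i"
    by (simp add: divm_def grad_def divg_def jac_def matrix_vector_mult_def inner_vec_def
        sum.distrib sum_distrib_left sum_distrib_right algebra_simps)
qed

lemma divg_symmetric_matrix_vector:
  fixes M :: "(real^'d::finite) \<times> real \<Rightarrow> real^'d^'d" and w :: "(real^'d) \<times> real \<Rightarrow> real^'d"
  assumes U: "open U" "z \<in> U" and sym: "\<And>y i j. y \<in> U \<Longrightarrow> M y $ i $ j = M y $ j $ i"
    and dM: "\<And>i j. (\<lambda>y. M y $ i $ j) differentiable (at z)" and dw: "w differentiable (at z)"
  shows "divg (\<lambda>y. M y *v w y) z = divm M z \<bullet> w z + ddot (M z) (jac w z)"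
proof -
  have col: "dx i (\<lambda>y. M y $ i $ j) z = dx i (\<lambda>y. M y $ j $ i) z" for i j
    unfolding dx_def using frechet_derivative_transform_within_open[OF dM U sym] by simp
  have "divg (\<lambda>y. M y *v w y) z
      = (\<Sum>i\<in>UNIV. \<Sum>j\<in>UNIV. M z $ i $ j * dx i (\<lambda>y. w y $ j) z)
      + (\<Sum>i\<in>UNIV. \<Sum>j\<in>UNIV. dx i (\<lambda>y. M y $ i $ j) z * w z $ j)"
    using dM dw
    by (simp add: divg_def matrix_vector_mult_def dx_def fd_sum fd_mult differentiable_vec_nth
        differentiable_mult sum.distrib)
  also have "(\<Sum>i\<in>UNIV. \<Sum>j\<in>UNIV. M z $ i $ j * dx i (\<lambda>y. w y $ j) z) = ddot (M z) (jac w z)"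
    unfolding ddot_def jac_def using sym[OF U(2)] by (subst sum.swap) simp
  also have "(\<Sum>i\<in>UNIV. \<Sum>j\<in>UNIV. dx i (\<lambda>y. M y $ i $ j) z * w z $ j)
      = (\<Sum>i\<in>UNIV. \<Sum>j\<in>UNIV. dx i (\<lambda>y. M y $ j $ i) z * w z $ j)"
    by (intro sum.cong refl, subst col, rule refl)
  also have "\<dots> = (\<Sum>j\<in>UNIV. \<Sum>i\<in>UNIV. dx i (\<lambda>y. M y $ j $ i) z * w z $ j)"
    by (rule sum.swap)
  also have "\<dots> = divm M z \<bullet> w z"
    by (simp add: divm_def inner_vec_def sum_distrib_right)
  finally show ?thesis by simp
qed

lemma ddot_diff_left: "ddot (A - B) C = ddot A C - ddot B C"
  by (simp add: ddot_def sum_subtractf algebra_simps)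

lemma ddot_scaleR_left: "ddot (c *\<^sub>R A) B = c * ddot A B"
  by (simp add: ddot_def sum_distrib_left algebra_simps)

lemma ddot_outer: "ddot (outer a b) A = b \<bullet> (transpose A *v a)"
  unfolding ddot_def outer_def inner_vec_def matrix_vector_mult_def transpose_def
  by (subst sum.swap) (simp add: sum_distrib_left algebra_simps)

lemma ddot_identity_jac: "ddot (mat 1) (jac w z) = divg w z"
  by (simp add: ddot_def mat_def jac_def divg_def if_distrib[of "\<lambda>t. t * _"] cong: if_cong)

text \<open>Contracting a matrix with its symmetric part gives the squared norm of the symmetric part;
  this produces the viscous dissipation \<open>|D v|\<^sup>2\<close>.\<close>
lemma ddot_symmetric_part:
  fixes A :: "real^'d::finite^'d"
  defines "D \<equiv> \<chi> i j. (A $ i $ j + A $ j $ i) / 2"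
  shows "ddot D A = frob2 D"
proof -
  have "ddot D A = (\<Sum>i\<in>UNIV. \<Sum>j\<in>UNIV. D $ j $ i * A $ j $ i)"
    unfolding ddot_def by (subst sum.swap) simp
  then have "2 * ddot D A = (\<Sum>i\<in>UNIV. \<Sum>j\<in>UNIV. D $ i $ j * A $ i $ j + D $ j $ i * A $ j $ i)"
    unfolding ddot_def by (simp add: sum.distrib)
  also have "\<dots> = 2 * frob2 D"
    unfolding frob2_def by (simp add: D_def sum_distrib_left power2_eq_square field_simps)
  finally show ?thesis by simp
qed

lemma deriv_along_line:
  fixes F :: "'a::real_normed_vector \<Rightarrow> real"
  assumes "F differentiable (at (q + t *\<^sub>R d))"
  shows "deriv (\<lambda>t. F (q + t *\<^sub>R d)) t = frechet_derivative F (at (q + t *\<^sub>R d)) d"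
proof -
  have "((\<lambda>t. F (q + t *\<^sub>R d)) has_real_derivative frechet_derivative F (at (q + t *\<^sub>R d)) d) (at t)"
    using has_derivative_along_line[OF assms, of UNIV]
    unfolding has_field_derivative_def by (simp add: mult.commute[of _ "frechet_derivative F _ _"])
  then show ?thesis by (rule DERIV_imp_deriv)
qed

lemma df_dphi_partial:
  fixes f :: "real \<Rightarrow> real^'d::finite \<Rightarrow> real"
  assumes "smooth_on UNIV (\<lambda>(s, q). f s q)"
  shows "df_dphi f s q = frechet_derivative (\<lambda>(s, q). f s q) (at (s, q)) (1, 0)"
proof -
  have "deriv (\<lambda>t. (\<lambda>(s, q). f s q) ((0, q) + t *\<^sub>R (1, 0))) s
      = frechet_derivative (\<lambda>(s, q). f s q) (at ((0, q) + s *\<^sub>R (1, 0))) (1, 0)"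
    using smooth_on_differentiable[OF assms] by (intro deriv_along_line) simp
  then show ?thesis unfolding df_dphi_def by simp
qed

lemma df_dgrad_partial:
  fixes f :: "real \<Rightarrow> real^'d::finite \<Rightarrow> real"
  assumes "smooth_on UNIV (\<lambda>(s, q). f s q)"
  shows "df_dgrad f s q $ k = frechet_derivative (\<lambda>(s, q). f s q) (at (s, q)) (0, axis k 1)"
proof -
  have "deriv (\<lambda>t. (\<lambda>(s, q). f s q) ((s, q) + t *\<^sub>R (0, axis k 1))) 0
      = frechet_derivative (\<lambda>(s, q). f s q) (at ((s, q) + 0 *\<^sub>R (0, axis k 1))) (0, axis k 1)"
    using smooth_on_differentiable[OF assms] by (intro deriv_along_line) simp
  then show ?thesis unfolding df_dgrad_def by simp
qed

lemma pair_decomposition: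
  "((a, w) :: real \<times> (real^'d::finite)) = a *\<^sub>R (1, 0) + (\<Sum>k\<in>UNIV. (w $ k) *\<^sub>R (0, axis k 1))"
proof -
  have "fst (\<Sum>k\<in>UNIV. (w $ k) *\<^sub>R ((0::real), axis k (1::real))) = 0"
    by (simp add: fst_sum)
  moreover have "snd (\<Sum>k\<in>UNIV. (w $ k) *\<^sub>R ((0::real), axis k (1::real))) = w"
    by (simp add: snd_sum vec_lambda_as_sum[symmetric])
  ultimately show ?thesis by (simp add: prod_eq_iff)
qed

lemma fd_free_energy:
  fixes f :: "real \<Rightarrow> real^'d::finite \<Rightarrow> real" and \<phi> :: "'a::real_normed_vector \<Rightarrow> real"
    and G :: "'a \<Rightarrow> real^'d"
  assumes f: "smooth_on UNIV (\<lambda>(s, q). f s q)"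
    and d\<phi>: "\<phi> differentiable (at z)" and dG: "G differentiable (at z)"
  shows "frechet_derivative (\<lambda>y. f (\<phi> y) (G y)) (at z) b
    = df_dphi f (\<phi> z) (G z) * frechet_derivative \<phi> (at z) b
      + df_dgrad f (\<phi> z) (G z) \<bullet> frechet_derivative G (at z) b"
proof -
  define D where "D = frechet_derivative (\<lambda>(s, q). f s q) (at (\<phi> z, G z))"
  have dF: "(\<lambda>(s, q). f s q) differentiable (at (\<phi> z, G z))"
    using smooth_on_differentiable[OF f] by simp
  have lin: "linear D"
    unfolding D_def using linear_frechet_derivative[OF dF] .
  have "((\<lambda>y. (\<lambda>(s, q). f s q) (\<phi> y, G y)) has_derivative
      (\<lambda>h. D (frechet_derivative \<phi> (at z) h, frechet_derivative G (at z) h))) (at z)"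
    unfolding D_def
    using has_derivative_compose[OF has_derivative_Pair[OF fd_works[OF d\<phi>] fd_works[OF dG]] fd_works[OF dF]]
    by simp
  then have "frechet_derivative (\<lambda>y. f (\<phi> y) (G y)) (at z) b
      = D (frechet_derivative \<phi> (at z) b, frechet_derivative G (at z) b)"
    by (simp add: fd_apply)
  also have "\<dots> = frechet_derivative \<phi> (at z) b * D (1, 0)
      + (\<Sum>k\<in>UNIV. frechet_derivative G (at z) b $ k * D (0, axis k 1))"
    by (subst pair_decomposition) (simp only: linear_add[OF lin] linear_sum[OF lin] linear_scale[OF lin] real_scaleR_def)
  also have "\<dots> = df_dphi f (\<phi> z) (G z) * frechet_derivative \<phi> (at z) b
      + df_dgrad f (\<phi> z) (G z) \<bullet> frechet_derivative G (at z) b"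
    unfolding D_def df_dphi_partial[OF f] df_dgrad_partial[OF f] inner_vec_def
    by (simp add: mult.commute)
  finally show ?thesis .
qed

lemma differentiable_free_energy:
  fixes f :: "real \<Rightarrow> real^'d::finite \<Rightarrow> real" and \<phi> :: "'a::real_normed_vector \<Rightarrow> real"
    and G :: "'a \<Rightarrow> real^'d"
  assumes f: "smooth_on UNIV (\<lambda>(s, q). f s q)"
    and "\<phi> differentiable (at z)" "G differentiable (at z)"
  shows "(\<lambda>y. f (\<phi> y) (G y)) differentiable (at z)"
proof -
  have "(\<lambda>y. (\<lambda>(s, q). f s q) (\<phi> y, G y)) differentiable (at z)"
    using smooth_on_differentiable[OF f]
    by (intro differentiable_compose[OF _ differentiable_Pair[OF assms(2,3)]]) simp
  then show ?thesis by simp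
qed

lemma differentiable_df_dgrad:
  fixes f :: "real \<Rightarrow> real^'d::finite \<Rightarrow> real" and \<phi> :: "'a::real_normed_vector \<Rightarrow> real"
    and G :: "'a \<Rightarrow> real^'d"
  assumes f: "smooth_on UNIV (\<lambda>(s, q). f s q)"
    and "\<phi> differentiable (at z)" "G differentiable (at z)"
  shows "(\<lambda>y. df_dgrad f (\<phi> y) (G y)) differentiable (at z)"
proof -
  have "(\<lambda>y. (\<lambda>w. frechet_derivative (\<lambda>(s, q). f s q) (at w) (0, axis k 1)) (\<phi> y, G y)) differentiable (at z)" for k
    using smooth_on_partial_differentiable[OF f gradient_direction_Basis]
    by (intro differentiable_compose[OF _ differentiable_Pair[OF assms(2,3)]]) simp
  then have "(\<lambda>y. \<chi> k. df_dgrad f (\<phi> y) (G y) $ k) differentiable (at z)"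
    by (intro differentiable_vec_lambda) (simp add: df_dgrad_partial[OF f])
  then show ?thesis by simp
qed

lemma dx_eq: "dx i u = (\<lambda>z. frechet_derivative u (at z) (axis i 1, 0))"
  by (simp add: fun_eq_iff dx_def)

lemma dt_eq: "dt u = (\<lambda>z. frechet_derivative u (at z) (0, 1))"
  by (simp add: fun_eq_iff dt_def)

lemma smooth_on_dx:
  fixes u :: "(real^'d::finite) \<times> real \<Rightarrow> 'b::real_normed_vector"
  shows "smooth_on S u \<Longrightarrow> z \<in> S \<Longrightarrow> dx i u differentiable (at z)"
  unfolding dx_eq by (rule smooth_on_partial_differentiable[OF _ space_direction_Basis])

lemma smooth_on_dt:
  fixes u :: "(real^'d::finite) \<times> real \<Rightarrow> 'b::real_normed_vector"
  shows "smooth_on S u \<Longrightarrow> z \<in> S \<Longrightarrow> dt u differentiable (at z)"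
  unfolding dt_eq by (rule smooth_on_partial_differentiable[OF _ time_direction_Basis])

lemma smooth_on_grad:
  "smooth_on S u \<Longrightarrow> z \<in> S \<Longrightarrow> grad u differentiable (at z)"
proof -
  assume "smooth_on S u" "z \<in> S"
  then have "(\<lambda>y. \<chi> i. dx i u y) differentiable (at z)"
    by (intro differentiable_vec_lambda smooth_on_dx)
  then show ?thesis by (simp add: grad_def[abs_def])
qed

text \<open>By Schwarz's theorem the Hessian of a smooth function is symmetric and its time
  derivative commutes with the gradient.\<close>
lemma hessian_symmetric:
  assumes "open S" "z \<in> S" "smooth_on S u"
  shows "transpose (jac (grad u) z) = jac (grad u) z"
proof -
  have "dx i (dx k u) z = dx k (dx i u) z" for i k
    unfolding dx_eq
    by (rule smooth_mixed_partials[OF assms(1,2,3) space_direction_Basis space_direction_Basis])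
  then show ?thesis
    by (simp add: vec_eq_iff transpose_def jac_def grad_def)
qed

lemma time_derivative_grad:
  assumes "open S" "z \<in> S" "smooth_on S u"
  shows "dt (grad u) z = grad (dt u) z"
proof -
  have "dt (dx k u) z = dx k (dt u) z" for k
    unfolding dx_eq dt_eq
    by (rule smooth_mixed_partials[OF assms(1,2,3) space_direction_Basis time_direction_Basis])
  then show ?thesis
    using smooth_on_grad[OF assms(3,2)]
    by (simp add: vec_eq_iff dt_def fd_vec_nth[symmetric] grad_def)
qed

lemma grad_add:
  "s differentiable (at z) \<Longrightarrow> r differentiable (at z) \<Longrightarrow> grad (\<lambda>y. s y + r y) z = grad s z + grad r z"
  by (simp add: vec_eq_iff grad_def dx_def fd_add)

lemma grad_real_comp:
  fixes g :: "real \<Rightarrow> real"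
  shows "g differentiable (at (u z)) \<Longrightarrow> u differentiable (at z) \<Longrightarrow>
    grad (\<lambda>y. g (u y)) z = deriv g (u z) *\<^sub>R grad u z"
  by (simp add: vec_eq_iff grad_def dx_def fd_real_comp)

lemma divm_cong_open:
  assumes "open U" "z \<in> U" "\<And>y. y \<in> U \<Longrightarrow> A y = B y"
    and "\<And>i j. (\<lambda>y. A y $ i $ j) differentiable (at z)"
  shows "divm A z = divm B z"
  unfolding divm_def dx_def
  using frechet_derivative_transform_within_open[OF assms(4) assms(1,2)] assms(3) by simp

lemma divg_cong_open:
  assumes "open U" "z \<in> U" "\<And>y. y \<in> U \<Longrightarrow> w y = q y" and "w differentiable (at z)"
  shows "divg w z = divg q z"
  unfolding divg_def dx_def
  using frechet_derivative_transform_within_open[OF differentiable_vec_nth[OF assms(4)] assms(1,2)] assms(3)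
  by simp

lemma fd_kinetic_energy:
  fixes s :: "'a::real_normed_vector \<Rightarrow> real" and w :: "'a \<Rightarrow> 'b::real_inner"
  assumes "s differentiable (at z)" "w differentiable (at z)"
  shows "frechet_derivative (\<lambda>y. s y * (norm (w y))\<^sup>2 / 2) (at z) b
    = frechet_derivative s (at z) b * (norm (w z))\<^sup>2 / 2 + s z * (w z \<bullet> frechet_derivative w (at z) b)"
proof -
  have "frechet_derivative (\<lambda>y. s y * (norm (w y))\<^sup>2 / 2) (at z) b
      = frechet_derivative (\<lambda>y. s y * (w y \<bullet> w y)) (at z) b / 2"
    unfolding power2_norm_eq_inner using assms by (simp add: fd_divide_const)
  also have "\<dots> = frechet_derivative s (at z) b * (norm (w z))\<^sup>2 / 2 + s z * (w z \<bullet> frechet_derivative w (at z) b)"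
    using assms by (simp add: fd_mult fd_inner power2_norm_eq_inner inner_commute field_simps)
  finally show ?thesis .
qed

lemma frob2_nonneg: "0 \<le> frob2 A"
  unfolding frob2_def by (intro sum_nonneg) auto

locale two_phase_flow =
  fixes S :: "((real^'d::finite) \<times> real) set"
    and v :: "(real^'d) \<times> real \<Rightarrow> real^'d"
    and p \<phi> \<mu> :: "(real^'d) \<times> real \<Rightarrow> real"
    and rho rhoc eta m :: "real \<Rightarrow> real"
    and f a :: "real \<Rightarrow> real^'d \<Rightarrow> real"
  assumes open_S: "open S"
    and smooth_v: "smooth_on S v" and smooth_p: "smooth_on S p"
    and smooth_phi: "smooth_on S \<phi>" and smooth_mu: "smooth_on S \<mu>"
    and smooth_rho: "smooth_on UNIV rho" and smooth_rhoc: "smooth_on UNIV rhoc"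
    and smooth_eta: "smooth_on UNIV eta" and smooth_m: "smooth_on UNIV m"
    and smooth_f: "smooth_on UNIV (\<lambda>(s, q). f s q)"
    and a_rel: "\<And>z. z \<in> S \<Longrightarrow> df_dgrad f (\<phi> z) (grad \<phi> z) = a (\<phi> z) (grad \<phi> z) *\<^sub>R grad \<phi> z"
    and momentum: "\<And>z. z \<in> S \<Longrightarrow>
        dt (\<lambda>y. rho (\<phi> y) *\<^sub>R v y) z
      + divm (\<lambda>y. rho (\<phi> y) *\<^sub>R outer (v y) (v y)) z
      - divm (\<lambda>y. (2 * eta (\<phi> y)) *\<^sub>R symgrad v y) z
      + grad p z
      = - divm (\<lambda>y. a (\<phi> y) (grad \<phi> y) *\<^sub>R outer (grad \<phi> y) (grad \<phi> y)) z"
    and incompr: "\<And>z. z \<in> S \<Longrightarrow> divg v z = 0"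
    and transport: "\<And>z. z \<in> S \<Longrightarrow>
        dt (\<lambda>y. rhoc (\<phi> y)) z + v z \<bullet> grad (\<lambda>y. rhoc (\<phi> y)) z
      = divg (\<lambda>y. m (\<phi> y) *\<^sub>R grad \<mu> y) z"
    and chem: "\<And>z. z \<in> S \<Longrightarrow>
        deriv rhoc (\<phi> z) * \<mu> z
      = df_dphi f (\<phi> z) (grad \<phi> z)
      - divg (\<lambda>y. a (\<phi> y) (grad \<phi> y) *\<^sub>R grad \<phi> y) z
      - deriv rho (\<phi> z) * (norm (v z))\<^sup>2 / 2"
begin

definition xi :: "(real^'d) \<times> real \<Rightarrow> real^'d" where
  "xi y = df_dgrad f (\<phi> y) (grad \<phi> y)"

definition phidot :: "(real^'d) \<times> real \<Rightarrow> real" where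
  "phidot y = dt \<phi> y + v y \<bullet> grad \<phi> y"

definition energy :: "(real^'d) \<times> real \<Rightarrow> real" where
  "energy y = rho (\<phi> y) * (norm (v y))\<^sup>2 / 2 + f (\<phi> y) (grad \<phi> y)"

definition flux :: "(real^'d) \<times> real \<Rightarrow> real^'d" where
  "flux y = - (m (\<phi> y) *\<^sub>R grad \<mu> y)"

definition stress :: "(real^'d) \<times> real \<Rightarrow> real^'d^'d" where
  "stress y = (2 * eta (\<phi> y)) *\<^sub>R symgrad v y - outer (grad \<phi> y) (xi y) - p y *\<^sub>R mat 1"

lemma differentiable_coefficient:
  "rho differentiable (at s)" "rhoc differentiable (at s)" "eta differentiable (at s)" "m differentiable (at s)"
  using smooth_rho smooth_rhoc smooth_eta smooth_m by (auto intro: smooth_on_differentiable)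

lemma differentiable_primary:
  assumes "z \<in> S"
  shows "v differentiable (at z)" "p differentiable (at z)" "\<phi> differentiable (at z)"
    "\<mu> differentiable (at z)" "grad \<phi> differentiable (at z)" "grad \<mu> differentiable (at z)"
    "dt \<phi> differentiable (at z)" "dx j (\<lambda>y. v y $ i) differentiable (at z)"
  using assms smooth_v smooth_p smooth_phi smooth_mu
  by (auto intro: smooth_on_differentiable smooth_on_grad smooth_on_dt
      smooth_on_dx[OF smooth_on_component[OF open_S]])

lemma differentiable_derived:
  assumes z: "z \<in> S"
  shows "(\<lambda>y. rho (\<phi> y)) differentiable (at z)" "(\<lambda>y. rhoc (\<phi> y)) differentiable (at z)"
    "(\<lambda>y. eta (\<phi> y)) differentiable (at z)" "(\<lambda>y. m (\<phi> y)) differentiable (at z)"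
    and differentiable_xi: "xi differentiable (at z)"
    and differentiable_phidot: "phidot differentiable (at z)"
    and differentiable_energy: "energy differentiable (at z)"
  using differentiable_compose[OF differentiable_coefficient(1) differentiable_primary(3)[OF z]]
    differentiable_compose[OF differentiable_coefficient(2) differentiable_primary(3)[OF z]]
    differentiable_compose[OF differentiable_coefficient(3) differentiable_primary(3)[OF z]]
    differentiable_compose[OF differentiable_coefficient(4) differentiable_primary(3)[OF z]]
    differentiable_df_dgrad[OF smooth_f differentiable_primary(3,5)[OF z]]
    differentiable_free_energy[OF smooth_f differentiable_primary(3,5)[OF z]]
    differentiable_primary[OF z]
  by (simp_all add: xi_def[abs_def] phidot_def[abs_def] energy_def[abs_def] power2_norm_eq_inner)

lemma differentiable_stress_entries:
  assumes z: "z \<in> S"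
  shows "(\<lambda>y. ((2 * eta (\<phi> y)) *\<^sub>R symgrad v y) $ i $ j) differentiable (at z)"
    "(\<lambda>y. outer (grad \<phi> y) (xi y) $ i $ j) differentiable (at z)"
    "(\<lambda>y. (p y *\<^sub>R mat 1 :: real^'d^'d) $ i $ j) differentiable (at z)"
    "(\<lambda>y. stress y $ i $ j) differentiable (at z)"
  using differentiable_primary[OF z] differentiable_derived[OF z]
  by (simp_all add: stress_def symgrad_def outer_def mat_def differentiable_vec_nth)

text \<open>The stress tensor is symmetric: the capillary part \<open>\<nabla>\<phi> \<otimes> \<xi>\<close> is, since \<open>\<xi> \<parallel> \<nabla>\<phi>\<close>.\<close>
lemma stress_symmetric: "y \<in> S \<Longrightarrow> stress y $ i $ j = stress y $ j $ i"
  by (cases "i = j") (simp_all add: stress_def symgrad_def outer_def xi_def a_rel mat_def add.commute)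

text \<open>By the momentum equation, \<open>div T = \<partial>\<^sub>t(\<rho>v) + div(\<rho> v \<otimes> v) = \<rho>'(\<phi>) \<phi>\<^sup>\<bullet> v + \<rho> (\<partial>\<^sub>t v + (\<nabla>v) v)\<close>.\<close>
lemma stress_divergence:
  assumes z: "z \<in> S"
  shows "divm stress z = (deriv rho (\<phi> z) * phidot z) *\<^sub>R v z + rho (\<phi> z) *\<^sub>R (dt v z + jac v z *v v z)"
proof -
  note d = differentiable_primary[OF z] differentiable_derived[OF z] differentiable_stress_entries[OF z]
  have "divm stress z = divm (\<lambda>y. (2 * eta (\<phi> y)) *\<^sub>R symgrad v y) z
      - divm (\<lambda>y. outer (grad \<phi> y) (xi y)) z - divm (\<lambda>y. p y *\<^sub>R mat 1) z"
    unfolding stress_def[abs_def] using d by (simp add: divm_diff)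
  also have "divm (\<lambda>y. outer (grad \<phi> y) (xi y)) z
      = divm (\<lambda>y. a (\<phi> y) (grad \<phi> y) *\<^sub>R outer (grad \<phi> y) (grad \<phi> y)) z"
    using d by (intro divm_cong_open[OF open_S z]) (simp_all add: xi_def a_rel outer_def vec_eq_iff)
  also have "divm (\<lambda>y. p y *\<^sub>R mat 1) z = grad p z"
    using d by (simp add: divm_scaled_identity)
  finally have split: "divm stress z = divm (\<lambda>y. (2 * eta (\<phi> y)) *\<^sub>R symgrad v y) z
      - divm (\<lambda>y. a (\<phi> y) (grad \<phi> y) *\<^sub>R outer (grad \<phi> y) (grad \<phi> y)) z - grad p z" .
  have "divm (\<lambda>y. (2 * eta (\<phi> y)) *\<^sub>R symgrad v y) z
      = dt (\<lambda>y. rho (\<phi> y) *\<^sub>R v y) z + divm (\<lambda>y. rho (\<phi> y) *\<^sub>R outer (v y) (v y)) z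
        + grad p z + divm (\<lambda>y. a (\<phi> y) (grad \<phi> y) *\<^sub>R outer (grad \<phi> y) (grad \<phi> y)) z"
    using momentum[OF z] by (simp add: algebra_simps)
  then have "divm stress z = dt (\<lambda>y. rho (\<phi> y) *\<^sub>R v y) z + divm (\<lambda>y. rho (\<phi> y) *\<^sub>R outer (v y) (v y)) z"
    unfolding split by simp
  also have "\<dots> = (deriv rho (\<phi> z) * dt \<phi> z) *\<^sub>R v z + rho (\<phi> z) *\<^sub>R dt v z
      + (deriv rho (\<phi> z) * (grad \<phi> z \<bullet> v z)) *\<^sub>R v z + rho (\<phi> z) *\<^sub>R (jac v z *v v z)"
    using d incompr[OF z] differentiable_coefficient
    by (simp add: dt_def fd_scaleR fd_real_comp divm_scaleR_outer grad_real_comp)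
  finally show ?thesis
    by (simp add: phidot_def inner_commute algebra_simps)
qed

text \<open>Power of the stress: \<open>div(T v) = div T \<cdot> v + T : \<nabla>v\<close>, where the viscous part of \<open>T : \<nabla>v\<close>
  is the dissipation \<open>2\<eta> |Dv|\<^sup>2\<close> and the pressure part vanishes by incompressibility.\<close>
lemma stress_power:
  assumes z: "z \<in> S"
  shows "divg (\<lambda>y. stress y *v v y) z
    = deriv rho (\<phi> z) * phidot z * (norm (v z))\<^sup>2 + rho (\<phi> z) * (v z \<bullet> (dt v z + jac v z *v v z))
      + 2 * eta (\<phi> z) * frob2 (symgrad v z) - xi z \<bullet> (transpose (jac v z) *v grad \<phi> z)"
proof -
  have "symgrad v z = (\<chi> i j. (jac v z $ i $ j + jac v z $ j $ i) / 2)"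
    by (simp add: symgrad_def jac_def)
  then have viscous: "ddot (symgrad v z) (jac v z) = frob2 (symgrad v z)"
    using ddot_symmetric_part by simp
  have "ddot (stress z) (jac v z) = 2 * eta (\<phi> z) * frob2 (symgrad v z) - xi z \<bullet> (transpose (jac v z) *v grad \<phi> z)"
    using incompr[OF z]
    by (simp add: stress_def ddot_diff_left ddot_scaleR_left ddot_outer ddot_identity_jac viscous)
  moreover have "divm stress z \<bullet> v z
      = deriv rho (\<phi> z) * phidot z * (norm (v z))\<^sup>2 + rho (\<phi> z) * (v z \<bullet> (dt v z + jac v z *v v z))"
    by (simp add: stress_divergence[OF z] power2_norm_eq_inner inner_add_right inner_commute)
  ultimately show ?thesis
    using divg_symmetric_matrix_vector[OF open_S z stress_symmetric
        differentiable_stress_entries(4)[OF z] differentiable_primary(1)[OF z]]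
    by simp
qed

lemma energy_transport:
  assumes z: "z \<in> S"
  shows "dt energy z + v z \<bullet> grad energy z
    = deriv rho (\<phi> z) * phidot z * (norm (v z))\<^sup>2 / 2 + rho (\<phi> z) * (v z \<bullet> (dt v z + jac v z *v v z))
      + df_dphi f (\<phi> z) (grad \<phi> z) * phidot z + xi z \<bullet> (grad (dt \<phi>) z + transpose (jac (grad \<phi>) z) *v v z)"
proof -
  note d = differentiable_primary[OF z] differentiable_derived[OF z]
  have kinetic: "(\<lambda>y. rho (\<phi> y) * (norm (v y))\<^sup>2 / 2) differentiable (at z)"
    using d by (simp add: power2_norm_eq_inner)
  have phidot: "frechet_derivative \<phi> (at z) (v z, 1) = phidot z"
    using material_derivative[OF d(3)] by (simp add: phidot_def)
  have grad_phi: "frechet_derivative (grad \<phi>) (at z) (v z, 1) = grad (dt \<phi>) z + transpose (jac (grad \<phi>) z) *v v z"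
    using material_derivative_vec[OF d(5)] time_derivative_grad[OF open_S z smooth_phi]
      hessian_symmetric[OF open_S z smooth_phi] by simp
  have "dt energy z + v z \<bullet> grad energy z = frechet_derivative energy (at z) (v z, 1)"
    using material_derivative[OF differentiable_energy[OF z]] by simp
  also have "\<dots> = frechet_derivative (\<lambda>y. rho (\<phi> y)) (at z) (v z, 1) * (norm (v z))\<^sup>2 / 2
      + rho (\<phi> z) * (v z \<bullet> frechet_derivative v (at z) (v z, 1))
      + (df_dphi f (\<phi> z) (grad \<phi> z) * frechet_derivative \<phi> (at z) (v z, 1)
         + xi z \<bullet> frechet_derivative (grad \<phi>) (at z) (v z, 1))"
    unfolding energy_def[abs_def] using d kinetic differentiable_free_energy[OF smooth_f d(3,5)]
    by (simp add: fd_add fd_kinetic_energy fd_free_energy[OF smooth_f] xi_def)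
  finally show ?thesis
    using d differentiable_coefficient
    by (simp add: fd_real_comp phidot grad_phi material_derivative_vec algebra_simps)
qed

lemma phidot_xi_divergence:
  assumes z: "z \<in> S"
  shows "divg (\<lambda>y. phidot y *\<^sub>R xi y) z
    = (grad (dt \<phi>) z + transpose (jac v z) *v grad \<phi> z + transpose (jac (grad \<phi>) z) *v v z) \<bullet> xi z
      + phidot z * divg xi z"
proof -
  note d = differentiable_primary[OF z] differentiable_derived[OF z]
  have "grad phidot z = grad (dt \<phi>) z + (transpose (jac v z) *v grad \<phi> z + transpose (jac (grad \<phi>) z) *v v z)"
    unfolding phidot_def[abs_def] using d by (simp add: grad_add grad_inner)
  then show ?thesis
    using d by (simp add: divg_scaleR add.assoc)
qed

text \<open>\<open>div(\<mu> J) = -\<tilde>m |\<nabla>\<mu>|\<^sup>2 - \<mu> div(\<tilde>m \<nabla>\<mu>)\<close>, where \<open>div(\<tilde>m \<nabla>\<mu>)\<close> is the material derivative of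
  \<open>\<rho>c(\<phi>)\<close> by the transport equation.\<close>
lemma chemical_flux_divergence:
  assumes z: "z \<in> S"
  shows "divg (\<lambda>y. \<mu> y *\<^sub>R flux y) z
    = - (m (\<phi> z) * (norm (grad \<mu> z))\<^sup>2 + \<mu> z * (deriv rhoc (\<phi> z) * phidot z))"
proof -
  note d = differentiable_primary[OF z] differentiable_derived[OF z]
  have "divg (\<lambda>y. m (\<phi> y) *\<^sub>R grad \<mu> y) z = frechet_derivative (\<lambda>y. rhoc (\<phi> y)) (at z) (v z, 1)"
    using transport[OF z] material_derivative[OF d(10)] by simp
  also have "\<dots> = deriv rhoc (\<phi> z) * phidot z"
    using material_derivative[OF d(3)] differentiable_coefficient d by (simp add: fd_real_comp phidot_def)
  finally have div_flux: "divg flux z = - (deriv rhoc (\<phi> z) * phidot z)"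
    unfolding flux_def[abs_def] using d by (simp add: divg_minus)
  have "flux differentiable (at z)"
    unfolding flux_def[abs_def] using d by simp
  then have "divg (\<lambda>y. \<mu> y *\<^sub>R flux y) z = grad \<mu> z \<bullet> flux z + \<mu> z * divg flux z"
    using divg_scaleR[OF d(4)] by blast
  then show ?thesis
    using div_flux by (simp add: flux_def power2_norm_eq_inner)
qed

text \<open>The chemical potential equation, with \<open>div(a \<nabla>\<phi>) = div \<xi>\<close> near the point.\<close>
lemma chemical_potential:
  assumes z: "z \<in> S"
  shows "deriv rhoc (\<phi> z) * \<mu> z
    = df_dphi f (\<phi> z) (grad \<phi> z) - divg xi z - deriv rho (\<phi> z) * (norm (v z))\<^sup>2 / 2"
proof -
  have "divg xi z = divg (\<lambda>y. a (\<phi> y) (grad \<phi> y) *\<^sub>R grad \<phi> y) z"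
    using differentiable_xi[OF z] by (intro divg_cong_open[OF open_S z]) (simp_all add: xi_def a_rel)
  then show ?thesis using chem[OF z] by simp
qed

lemma local_dissipation:
  assumes z: "z \<in> S"
  shows "dt energy z + v z \<bullet> grad energy z - divg (\<lambda>y. stress y *v v y) z
      - divg (\<lambda>y. phidot y *\<^sub>R xi y) z + divg (\<lambda>y. \<mu> y *\<^sub>R flux y) z
    = - (2 * eta (\<phi> z) * frob2 (symgrad v z) + m (\<phi> z) * (norm (grad \<mu> z))\<^sup>2)"
proof -
  have "\<mu> z * (deriv rhoc (\<phi> z) * phidot z)
      = phidot z * (df_dphi f (\<phi> z) (grad \<phi> z) - divg xi z - deriv rho (\<phi> z) * (norm (v z))\<^sup>2 / 2)"
    using chemical_potential[OF z] by (simp add: ac_simps)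
  then show ?thesis
    unfolding energy_transport[OF z] stress_power[OF z] phidot_xi_divergence[OF z]
      chemical_flux_divergence[OF z]
    by (simp add: inner_add_left inner_add_right inner_commute algebra_simps)
qed

end

theorem mainTheorem4:
  fixes \<Omega> :: "(real^'d::finite) set" and T :: real
    and v :: "(real^'d) \<times> real \<Rightarrow> real^'d"
    and p \<phi> \<mu> :: "(real^'d) \<times> real \<Rightarrow> real"
    and rho rhoc eta m :: "real \<Rightarrow> real"
    and f a :: "real \<Rightarrow> real^'d \<Rightarrow> real"
  defines "S \<equiv> \<Omega> \<times> {0<..<T}"
  assumes "open \<Omega>"
    and "smooth_on S v" and "smooth_on S p" and "smooth_on S \<phi>" and "smooth_on S \<mu>"
    and "smooth_on UNIV rho" and "smooth_on UNIV rhoc"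
    and "smooth_on UNIV eta" and "smooth_on UNIV m"
    and "smooth_on UNIV (\<lambda>(z, q). f z q)"
    and "\<forall>s. eta s \<ge> 0" and "\<forall>s. m s \<ge> 0"
    and a_rel: "\<forall>z\<in>S. df_dgrad f (\<phi> z) (grad \<phi> z) = a (\<phi> z) (grad \<phi> z) *\<^sub>R grad \<phi> z"
    and momentum: "\<forall>z\<in>S.
        dt (\<lambda>y. rho (\<phi> y) *\<^sub>R v y) z
      + divm (\<lambda>y. rho (\<phi> y) *\<^sub>R outer (v y) (v y)) z
      - divm (\<lambda>y. (2 * eta (\<phi> y)) *\<^sub>R symgrad v y) z
      + grad p z
      = - divm (\<lambda>y. a (\<phi> y) (grad \<phi> y) *\<^sub>R outer (grad \<phi> y) (grad \<phi> y)) z"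
    and incompr: "\<forall>z\<in>S. divg v z = 0"
    and transport: "\<forall>z\<in>S.
        dt (\<lambda>y. rhoc (\<phi> y)) z + v z \<bullet> grad (\<lambda>y. rhoc (\<phi> y)) z
      = divg (\<lambda>y. m (\<phi> y) *\<^sub>R grad \<mu> y) z"
    and chem: "\<forall>z\<in>S.
        deriv rhoc (\<phi> z) * \<mu> z
      = df_dphi f (\<phi> z) (grad \<phi> z)
      - divg (\<lambda>y. a (\<phi> y) (grad \<phi> y) *\<^sub>R grad \<phi> y) z
      - deriv rho (\<phi> z) * (norm (v z))\<^sup>2 / 2"
  shows "\<forall>z\<in>S.
     (let e = (\<lambda>y. rho (\<phi> y) * (norm (v y))\<^sup>2 / 2 + f (\<phi> y) (grad \<phi> y));
          J = (\<lambda>y. - (m (\<phi> y) *\<^sub>R grad \<mu> y));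
          \<xi> = (\<lambda>y. df_dgrad f (\<phi> y) (grad \<phi> y));
          phidot = (\<lambda>y. dt \<phi> y + v y \<bullet> grad \<phi> y);
          Tm = (\<lambda>y. (2 * eta (\<phi> y)) *\<^sub>R symgrad v y - outer (grad \<phi> y) (\<xi> y) - p y *\<^sub>R mat 1);
          lhs = dt e z + v z \<bullet> grad e z - divg (\<lambda>y. Tm y *v v y) z
                - divg (\<lambda>y. phidot y *\<^sub>R \<xi> y) z + divg (\<lambda>y. \<mu> y *\<^sub>R J y) z
      in lhs = - (2 * eta (\<phi> z) * frob2 (symgrad v z) + m (\<phi> z) * (norm (grad \<mu> z))\<^sup>2)
         \<and> lhs \<le> 0)"
proof -
  have "open S"
    unfolding S_def using \<open>open \<Omega>\<close> by (intro open_Times) auto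
  interpret flow: two_phase_flow S v p \<phi> \<mu> rho rhoc eta m f a
    by unfold_locales (use \<open>open S\<close> assms(2-) in blast)+
  have dissipation_nonpos:
    "- (2 * eta (\<phi> z) * frob2 (symgrad v z) + m (\<phi> z) * (norm (grad \<mu> z))\<^sup>2) \<le> 0" for z
  proof -
    have "0 \<le> 2 * eta (\<phi> z) * frob2 (symgrad v z) + m (\<phi> z) * (norm (grad \<mu> z))\<^sup>2"
      using \<open>\<forall>s. eta s \<ge> 0\<close> \<open>\<forall>s. m s \<ge> 0\<close> frob2_nonneg
      by (intro add_nonneg_nonneg mult_nonneg_nonneg) auto
    then show ?thesis by simp
  qed
  show ?thesis
    unfolding Let_def
    using flow.local_dissipation[unfolded flow.energy_def[abs_def] flow.stress_def[abs_def]
        flow.phidot_def[abs_def] flow.flux_def[abs_def] flow.xi_def[abs_def]] dissipation_nonpos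
    by simp
qed

end
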